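(* Let $(\mathfrak D,d)$ be a finite metric space, $p\in(1,\infty)$, $\vartheta\in\mathcal P(\mathfrak D)$, $\{\mu_k\}_{k\in\mathbb{N}}\subset\mathcal P(\mathfrak D)$, and for each $k$ let $(\varphi_k,\psi_k)$ be functions on $\mathfrak D$ with $\psi_k=\varphi_k^c$, $\varphi_k=\psi_k^c$ and $W_p^p(\vartheta,\mu_k)=\int\varphi_k\,d\mu_k+\int\psi_k\,d\vartheta$. There is a constant $C_{p,\mathfrak D}>0$, depending only on $p$, $\mathfrak D$ and $d$, such that for every finite $I\subset\mathbb{N}$, \[|G_I(\mu)-G_I(\nu)|\le C_{p,\mathfrak D}W_p(\mu,\nu)\qquad\text{for all }\mu,\nu\in\mathcal P(\mathfrak D),\] where $G_I(\mu):=\max_{k\in I}\big(\int\varphi_k\,d\mu+\int\psi_k\,d\vartheta\big)$.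
   Context: $\mathcal P(\mathfrak D)$: probability measures on $\mathfrak D$; $W_p$: $p$-Wasserstein distance with cost $d^p$; $\varphi^c(x):=\inf_{y\in\mathfrak D}(d(x,y)^p-\varphi(y))$. *)

theory Defs
  imports "HOL-Probability.Probability"
begin

text \<open>Finite metric space: a type of class finite and metric_space (metric = dist).
Probability measures on it: 'a pmf. Integral of f against mu: measure_pmf.expectation mu f.\<close>

definition couplings :: "'a pmf \<Rightarrow> 'b pmf \<Rightarrow> ('a \<times> 'b) pmf set" where
  "couplings \<mu> \<nu> = {\<pi>. map_pmf fst \<pi> = \<mu> \<and> map_pmf snd \<pi> = \<nu>}"

definition transport_cost :: "real \<Rightarrow> 'a::metric_space pmf \<Rightarrow> 'a pmf \<Rightarrow> real" where
  "transport_cost p \<mu> \<nu> =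
     (INF \<pi>\<in>couplings \<mu> \<nu>. measure_pmf.expectation \<pi> (\<lambda>(x,y). dist x y powr p))"

definition Wass :: "real \<Rightarrow> 'a::metric_space pmf \<Rightarrow> 'a pmf \<Rightarrow> real" where
  "Wass p \<mu> \<nu> = transport_cost p \<mu> \<nu> powr (1 / p)"

definition c_transform :: "real \<Rightarrow> ('a::metric_space \<Rightarrow> real) \<Rightarrow> 'a \<Rightarrow> real" where
  "c_transform p \<phi> x = (INF y. dist x y powr p - \<phi> y)"

end

theory Submission
  imports Defs
begin

text \<open>
  Only the relation \<open>\<phi>\<^sub>k = \<psi>\<^sub>k\<^sup>c\<close> matters: a c-transform inherits a modulus of continuity from the
  cost, uniformly in the transformed function. On a finite space
  \<open>\<bar>d(x,z)\<^sup>p - d(y,z)\<^sup>p\<bar> \<le> K d(x,y)\<^sup>p\<close> for some \<open>K\<close>, so every \<open>\<phi>\<^sub>k\<close> is \<open>K\<close>-Lipschitz for the cost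
  \<open>d\<^sup>p\<close>, and integrating against an arbitrary coupling of \<open>\<mu>\<close> and \<open>\<nu>\<close> gives
  \<open>\<bar>\<integral>\<phi>\<^sub>k d\<mu> - \<integral>\<phi>\<^sub>k d\<nu>\<bar> \<le> K W\<^sub>p\<^sup>p(\<mu>,\<nu>)\<close>. Since \<open>W\<^sub>p\<^sup>p \<le> B\<close> with \<open>B \<ge> 1\<close> a bound of the cost,
  \<open>W\<^sub>p\<^sup>p \<le> B W\<^sub>p\<close>. A maximum of finitely many functions that are uniformly Lipschitz is Lipschitz
  with the same constant.
\<close>

lemma abs_Max_image_diff_le:
  fixes a b :: "'i \<Rightarrow> real"
  assumes "finite I" and diff: "\<And>k. k \<in> I \<Longrightarrow> \<bar>a k - b k\<bar> \<le> M" and "M \<ge> 0"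
  shows "\<bar>Max (a ` I) - Max (b ` I)\<bar> \<le> M"
proof (cases "I = {}")
  case True
  then show ?thesis using \<open>M \<ge> 0\<close> by simp
next
  case False
  have one_side: "Max (f ` I) - Max (g ` I) \<le> M"
    if "\<And>k. k \<in> I \<Longrightarrow> \<bar>f k - g k\<bar> \<le> M" for f g :: "'i \<Rightarrow> real"
  proof -
    have "Max (f ` I) \<in> f ` I"
      using \<open>finite I\<close> False by (intro Max_in) auto
    then obtain k where k: "k \<in> I" "Max (f ` I) = f k" by auto
    have "g k \<le> Max (g ` I)" using k \<open>finite I\<close> by auto
    then show ?thesis using k that[OF k(1)] by linarith
  qed
  show ?thesis
    using one_side[of a b] one_side[of b a] diff by (force simp: abs_minus_commute)
qed

lemma le_mult_powr_inverse:
  fixes T B p :: real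
  assumes "1 < p" "0 \<le> T" "T \<le> B" "1 \<le> B"
  shows "T \<le> B * T powr (1 / p)"
proof (cases "T = 0")
  case True
  then show ?thesis by simp
next
  case False
  then have "T > 0" using assms by simp
  have "T = T powr (1 / p) * T powr (1 - 1 / p)"
    using \<open>T > 0\<close> by (simp add: powr_add[symmetric])
  also have "T powr (1 - 1 / p) \<le> B powr (1 - 1 / p)"
    using assms \<open>T > 0\<close> by (intro powr_mono2) (auto simp: field_simps)
  also have "B powr (1 - 1 / p) \<le> B powr 1"
    using assms by (intro powr_mono) (auto simp: field_simps)
  finally have "T \<le> T powr (1 / p) * B powr 1"
    by (simp add: mult_left_mono)
  then show ?thesis
    using assms by (simp add: mult.commute)
qed

lemma finite_powr_dist_diff_bound:
  "\<exists>K>0. \<forall>x y z :: 'a::{finite,metric_space}.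
     \<bar>dist x z powr p - dist y z powr p\<bar> \<le> K * dist x y powr p"
proof -
  let ?ratio = "\<lambda>(x::'a, y::'a, z::'a). \<bar>dist x z powr p - dist y z powr p\<bar> / dist x y powr p"
  define K where "K = Max (range ?ratio) + 1"
  have ratio_le: "?ratio (x, y, z) < K" for x y z
    unfolding K_def using Max_ge[OF finite_imageI[OF finite] rangeI, of ?ratio "(x, y, z)"] by simp
  have "\<bar>dist x z powr p - dist y z powr p\<bar> \<le> K * dist x y powr p" for x y z :: 'a
  proof (cases "x = y")
    case False
    then have "dist x y powr p > 0" by simp
    then have "\<bar>dist x z powr p - dist y z powr p\<bar> < K * dist x y powr p"
      using ratio_le[of x y z] by (simp add: divide_less_eq)
    then show ?thesis by simp
  qed simp
  moreover have "K > 0"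
    using ratio_le[of undefined undefined undefined] by simp
  ultimately show ?thesis by blast
qed

lemma finite_powr_dist_bound:
  "\<exists>B\<ge>1. \<forall>x y :: 'a::{finite,metric_space}. dist x y powr p \<le> B"
proof -
  let ?cost = "\<lambda>(x::'a, y::'a). dist x y powr p"
  have "dist x y powr p \<le> max 1 (Max (range ?cost))" for x y :: 'a
    using Max_ge[OF finite_imageI[OF finite] rangeI, of ?cost "(x, y)"] by simp
  then show ?thesis by (intro exI[of _ "max 1 (Max (range ?cost))"]) auto
qed

lemma c_transform_diff_le:
  fixes \<psi> :: "'a::{finite,metric_space} \<Rightarrow> real"
  assumes cost: "\<And>x y z::'a. \<bar>dist x z powr p - dist y z powr p\<bar> \<le> K * dist x y powr p"
  shows "\<bar>c_transform p \<psi> x - c_transform p \<psi> y\<bar> \<le> K * dist x y powr p"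
proof -
  let ?g = "\<lambda>x z. dist x z powr p - \<psi> z"
  have c_transform_Min: "c_transform p \<psi> x = Min (range (?g x))" for x
    unfolding c_transform_def by (rule cInf_eq_Min) auto
  have one_side: "c_transform p \<psi> x - c_transform p \<psi> y \<le> K * dist x y powr p" for x y
  proof -
    have "Min (range (?g y)) \<in> range (?g y)" by (rule Min_in) auto
    then obtain z where "Min (range (?g y)) = ?g y z" by blast
    then have z: "c_transform p \<psi> y = ?g y z"
      using c_transform_Min[of y] by simp
    have "c_transform p \<psi> x \<le> ?g x z"
      unfolding c_transform_Min by (rule Min_le) auto
    then have "c_transform p \<psi> x - c_transform p \<psi> y \<le> dist x z powr p - dist y z powr p"
      using z by simp
    also have "\<dots> \<le> K * dist x y powr p"
      using cost[of x z y] by simp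
    finally show ?thesis .
  qed
  show ?thesis
    using one_side[of x y] one_side[of y x] by (simp add: dist_commute)
qed

lemma pair_pmf_in_couplings: "pair_pmf \<mu> \<nu> \<in> couplings \<mu> \<nu>"
  unfolding couplings_def by (simp add: map_fst_pair_pmf map_snd_pair_pmf)

lemma transport_cost_nonneg: "0 \<le> transport_cost p \<mu> \<nu>"
  unfolding transport_cost_def
  by (rule cINF_greatest) (use pair_pmf_in_couplings in \<open>auto intro!: integral_nonneg_AE\<close>)

lemma transport_cost_le:
  fixes \<mu> \<nu> :: "'a::{finite,metric_space} pmf"
  assumes "\<And>x y::'a. dist x y powr p \<le> B"
  shows "transport_cost p \<mu> \<nu> \<le> B"
proof -
  have "bdd_below ((\<lambda>\<pi>. measure_pmf.expectation \<pi> (\<lambda>(x, y). dist x y powr p)) ` couplings \<mu> \<nu>)"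
    by (rule bdd_belowI[of _ 0]) (auto intro!: integral_nonneg_AE)
  then have "transport_cost p \<mu> \<nu>
      \<le> measure_pmf.expectation (pair_pmf \<mu> \<nu>) (\<lambda>(x, y). dist x y powr p)"
    unfolding transport_cost_def by (rule cINF_lower[OF _ pair_pmf_in_couplings])
  also have "\<dots> \<le> measure_pmf.expectation (pair_pmf \<mu> \<nu>) (\<lambda>_. B)"
    by (rule integral_mono) (auto intro!: integrable_measure_pmf_finite simp: assms)
  finally show ?thesis by simp
qed

lemma transport_cost_le_Wass:
  fixes \<mu> \<nu> :: "'a::{finite,metric_space} pmf"
  assumes "1 < p" "\<And>x y::'a. dist x y powr p \<le> B" "1 \<le> B"
  shows "transport_cost p \<mu> \<nu> \<le> B * Wass p \<mu> \<nu>"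
  unfolding Wass_def
  using le_mult_powr_inverse assms transport_cost_nonneg transport_cost_le by blast

lemma expectation_diff_le_transport_cost:
  fixes f :: "'a::{finite,metric_space} \<Rightarrow> real"
  assumes lip: "\<And>x y. \<bar>f x - f y\<bar> \<le> K * dist x y powr p" and "K > 0"
  shows "\<bar>measure_pmf.expectation \<mu> f - measure_pmf.expectation \<nu> f\<bar> \<le> K * transport_cost p \<mu> \<nu>"
proof -
  let ?E = "measure_pmf.expectation"
  have coupling_bound: "\<bar>?E \<mu> f - ?E \<nu> f\<bar> / K \<le> ?E \<pi> (\<lambda>(x, y). dist x y powr p)"
    if "\<pi> \<in> couplings \<mu> \<nu>" for \<pi>
  proof -
    have marginals: "\<mu> = map_pmf fst \<pi>" "\<nu> = map_pmf snd \<pi>"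
      using that unfolding couplings_def by auto
    have integrable: "integrable (measure_pmf \<pi>) g" for g :: "'a \<times> 'a \<Rightarrow> real"
      by (rule integrable_measure_pmf_finite) (simp add: finite_subset[of _ UNIV])
    have "?E \<mu> f - ?E \<nu> f = ?E \<pi> (\<lambda>z. f (fst z) - f (snd z))"
      unfolding marginals integral_map_pmf by (simp add: integrable)
    also have "\<bar>\<dots>\<bar> \<le> ?E \<pi> (\<lambda>z. \<bar>f (fst z) - f (snd z)\<bar>)"
      by (rule integral_abs_bound)
    also have "\<dots> \<le> ?E \<pi> (\<lambda>z. K * (case z of (x, y) \<Rightarrow> dist x y powr p))"
      by (rule integral_mono) (auto simp: integrable lip split: prod.splits)
    also have "\<dots> = K * ?E \<pi> (\<lambda>(x, y). dist x y powr p)"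
      by simp
    finally show ?thesis
      using \<open>K > 0\<close> by (simp add: divide_le_eq mult.commute)
  qed
  have "\<bar>?E \<mu> f - ?E \<nu> f\<bar> / K \<le> transport_cost p \<mu> \<nu>"
    unfolding transport_cost_def
    by (rule cINF_greatest) (use pair_pmf_in_couplings coupling_bound in blast)+
  then show ?thesis
    using \<open>K > 0\<close> by (simp add: divide_le_eq mult.commute)
qed

lemma expectation_c_transform_Wass_lipschitz:
  assumes "1 < p"
  shows "\<exists>C>0. \<forall>(\<psi> :: 'a::{finite,metric_space} \<Rightarrow> real) \<mu> \<nu>.
    \<bar>measure_pmf.expectation \<mu> (c_transform p \<psi>) - measure_pmf.expectation \<nu> (c_transform p \<psi>)\<bar>
      \<le> C * Wass p \<mu> \<nu>"
proof -
  obtain K where "K > 0"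
    and cost: "\<And>x y z::'a. \<bar>dist x z powr p - dist y z powr p\<bar> \<le> K * dist x y powr p"
    using finite_powr_dist_diff_bound by blast
  obtain B where "B \<ge> 1" and B: "\<And>x y::'a. dist x y powr p \<le> B"
    using finite_powr_dist_bound by blast
  have "\<bar>measure_pmf.expectation \<mu> (c_transform p \<psi>) - measure_pmf.expectation \<nu> (c_transform p \<psi>)\<bar>
      \<le> K * B * Wass p \<mu> \<nu>" for \<psi> :: "'a \<Rightarrow> real" and \<mu> \<nu>
  proof -
    have "\<bar>measure_pmf.expectation \<mu> (c_transform p \<psi>) - measure_pmf.expectation \<nu> (c_transform p \<psi>)\<bar>
        \<le> K * transport_cost p \<mu> \<nu>"
      by (rule expectation_diff_le_transport_cost[OF c_transform_diff_le[OF cost] \<open>K > 0\<close>])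
    also have "\<dots> \<le> K * (B * Wass p \<mu> \<nu>)"
      using transport_cost_le_Wass[OF assms B \<open>B \<ge> 1\<close>] \<open>K > 0\<close> by simp
    finally show ?thesis by simp
  qed
  then show ?thesis
    using \<open>K > 0\<close> \<open>B \<ge> 1\<close> by (intro exI[of _ "K * B"]) auto
qed

theorem lemmaB5:
  fixes p :: real
  assumes "1 < p"
  shows "\<exists>C>0. \<forall>(\<theta>::'a::{finite,metric_space} pmf) (\<mu>s :: nat \<Rightarrow> 'a pmf)
            (\<phi> :: nat \<Rightarrow> 'a \<Rightarrow> real) (\<psi> :: nat \<Rightarrow> 'a \<Rightarrow> real).
     (\<forall>k. \<psi> k = c_transform p (\<phi> k) \<and> \<phi> k = c_transform p (\<psi> k) \<and>
          Wass p \<theta> (\<mu>s k) powr p =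
            measure_pmf.expectation (\<mu>s k) (\<phi> k) + measure_pmf.expectation \<theta> (\<psi> k))
     \<longrightarrow> (\<forall>I :: nat set. finite I \<longrightarrow> (\<forall>\<mu> \<nu> :: 'a pmf.
           \<bar>Max ((\<lambda>k. measure_pmf.expectation \<mu> (\<phi> k) + measure_pmf.expectation \<theta> (\<psi> k)) ` I)
            - Max ((\<lambda>k. measure_pmf.expectation \<nu> (\<phi> k) + measure_pmf.expectation \<theta> (\<psi> k)) ` I)\<bar>
           \<le> C * Wass p \<mu> \<nu>))"
proof -
  obtain C where "C > 0" and lip: "\<And>(\<psi> :: 'a \<Rightarrow> real) \<mu> \<nu>.
      \<bar>measure_pmf.expectation \<mu> (c_transform p \<psi>) - measure_pmf.expectation \<nu> (c_transform p \<psi>)\<bar>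
        \<le> C * Wass p \<mu> \<nu>"
    using expectation_c_transform_Wass_lipschitz[OF assms] by blast
  show ?thesis
  proof (intro exI[of _ C] conjI allI impI)
    fix \<theta> :: "'a pmf" and \<mu>s :: "nat \<Rightarrow> 'a pmf" and \<phi> \<psi> :: "nat \<Rightarrow> 'a \<Rightarrow> real"
      and I :: "nat set" and \<mu> \<nu> :: "'a pmf"
    assume potentials: "\<forall>k. \<psi> k = c_transform p (\<phi> k) \<and> \<phi> k = c_transform p (\<psi> k) \<and>
          Wass p \<theta> (\<mu>s k) powr p =
            measure_pmf.expectation (\<mu>s k) (\<phi> k) + measure_pmf.expectation \<theta> (\<psi> k)"
      and "finite I"
    have "\<bar>measure_pmf.expectation \<mu> (\<phi> k) - measure_pmf.expectation \<nu> (\<phi> k)\<bar> \<le> C * Wass p \<mu> \<nu>"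
      for k
      using potentials lip[of \<mu> "\<psi> k" \<nu>] by metis
    moreover have "0 \<le> C * Wass p \<mu> \<nu>"
      using \<open>C > 0\<close> by (simp add: Wass_def)
    ultimately show "\<bar>Max ((\<lambda>k. measure_pmf.expectation \<mu> (\<phi> k) + measure_pmf.expectation \<theta> (\<psi> k)) ` I)
        - Max ((\<lambda>k. measure_pmf.expectation \<nu> (\<phi> k) + measure_pmf.expectation \<theta> (\<psi> k)) ` I)\<bar>
        \<le> C * Wass p \<mu> \<nu>"
      by (intro abs_Max_image_diff_le[OF \<open>finite I\<close>]) auto
  qed (use \<open>C > 0\<close> in simp)
qed

end
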